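(* Constructor has a strategy ensuring $g(n,K_3,S_4)\ge \frac{n}{3}(1+o(1))$ as $n\to\infty$, where $S_4$ is the star with $4$ leaves.
   Context: Constructor-Blocker game: given graphs $H$ and $F$, two players, Constructor and Blocker, alternately claim previously unclaimed edges of the complete graph $K_n$, Constructor moving first. Constructor may only claim an edge if her graph (the edges she has claimed) remains $F$-free (contains no subgraph isomorphic to $F$); Blocker may claim any unclaimed edge. The game ends when Constructor cannot claim any more edges or all edges are claimed. The score is the number of copies of $H$ in Constructor's graph at the end. Constructor maximizes, Blocker minimizes; $g(n,H,F)$ denotes the score under optimal play by both. *)

theory Defs
  imports Complex_Main
begin

text \<open>Graphs are given as pairs (vertex set, edge set); edges are 2-element sets.
  The host graph K_n has vertex set {..<n}; Constructor's graph is an edge set C.\<close>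

definition Kn_edges :: "nat \<Rightarrow> nat set set" where
  "Kn_edges n = {e. \<exists>u v. u \<noteq> v \<and> u < n \<and> v < n \<and> e = {u, v}}"

definition copies :: "nat \<Rightarrow> ('b set \<times> 'b set set) \<Rightarrow> nat set set \<Rightarrow> nat" where
  "copies n H C = card {(f ` fst H, (\<lambda>e. f ` e) ` snd H) | f.
      inj_on f (fst H) \<and> f ` fst H \<subseteq> {..<n} \<and> (\<lambda>e. f ` e) ` snd H \<subseteq> C}"

definition free :: "nat \<Rightarrow> ('c set \<times> 'c set set) \<Rightarrow> nat set set \<Rightarrow> bool" where
  "free n F C = (\<not> (\<exists>f. inj_on f (fst F) \<and> f ` fst F \<subseteq> {..<n} \<and> (\<lambda>e. f ` e) ` snd F \<subseteq> C))"

definition legal :: "nat \<Rightarrow> ('c set \<times> 'c set set) \<Rightarrow> nat set set \<Rightarrow> nat set set \<Rightarrow> nat set \<Rightarrow> bool" where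
  "legal n F C B e = (e \<in> Kn_edges n \<and> e \<notin> C \<and> e \<notin> B \<and> free n F (insert e C))"

text \<open>ensures n H F k C B t: from position (C,B) with Constructor to move iff t,
  Constructor has a strategy guaranteeing final score at least k.
  The game ends as soon as Constructor has no legal move (in particular when
  all edges are claimed).\<close>
inductive ensures :: "nat \<Rightarrow> ('b set \<times> 'b set set) \<Rightarrow> ('c set \<times> 'c set set) \<Rightarrow> nat
    \<Rightarrow> nat set set \<Rightarrow> nat set set \<Rightarrow> bool \<Rightarrow> bool"
  for n H F k where
  stop: "\<lbrakk>\<not> (\<exists>e. legal n F C B e); k \<le> copies n H C\<rbrakk> \<Longrightarrow> ensures n H F k C B t"
| cmove: "\<lbrakk>legal n F C B e; ensures n H F k (insert e C) B False\<rbrakk> \<Longrightarrow> ensures n H F k C B True"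
| bmove: "\<lbrakk>\<exists>e. legal n F C B e;
           \<forall>e \<in> Kn_edges n - C - B. ensures n H F k C (insert e B) True\<rbrakk>
          \<Longrightarrow> ensures n H F k C B False"

definition g :: "nat \<Rightarrow> ('b set \<times> 'b set set) \<Rightarrow> ('c set \<times> 'c set set) \<Rightarrow> nat" where
  "g n H F = (GREATEST k. ensures n H F k {} {} True)"

definition K3 :: "nat set \<times> nat set set" where
  "K3 = ({0, 1, 2}, {{0, 1}, {1, 2}, {0, 2}})"

definition S4 :: "nat set \<times> nat set set" where
  "S4 = ({0, 1, 2, 3, 4}, {{0, 1}, {0, 2}, {0, 3}, {0, 4}})"

end

theory Submission
  imports Defs
begin

text \<open>
  Constructor keeps the maximum degree of her graph at most 3, so it never contains a star with
  four leaves, and builds vertex-disjoint triangles in rounds. A round starts on isolated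
  vertices u, v of small Blocker degree: she claims uv, then uw for a further isolated w, and
  closes the triangle with vw unless Blocker has just taken it. In that case she claims ux and
  then vx or wx, whichever Blocker left free, for a reserve vertex x -- a vertex of degree 1 left
  over by an earlier round of this kind, or a fresh one -- and the unused one of v, w becomes a
  reserve vertex itself. So every round spends on average three vertices per triangle, while
  Blocker claims at most two edges per spent vertex; hence fewer than 4N vertices have Blocker
  degree above n/N, and these are easily avoided. The rounds go on until O(N + n/N) vertices
  are left, which gives n/3 - O(N + n/N) triangles.
\<close>

lemma finite_Kn_edges: "finite (Kn_edges n)"
proof (rule finite_subset)
  show "Kn_edges n \<subseteq> Pow {..<n}" by (auto simp: Kn_edges_def)
qed simp

lemma doubleton_in_Kn_edges_iff: "{a, b} \<in> Kn_edges n \<longleftrightarrow> a \<noteq> b \<and> a < n \<and> b < n"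
  by (auto simp: Kn_edges_def doubleton_eq_iff)

lemma obtain_in_diff_if_card_less:
  assumes "finite T" "card T < card S"
  obtains a where "a \<in> S" "a \<notin> T"
  using assms card_mono[of T S] by (meson not_le subsetI)

section \<open>Copies of a graph and the value of the game\<close>

definition is_graph :: "'b set \<times> 'b set set \<Rightarrow> bool" where
  "is_graph H \<longleftrightarrow> (\<forall>e\<in>snd H. e \<subseteq> fst H)"

lemma is_graph_K3: "is_graph K3"
  by (auto simp: is_graph_def K3_def)

definition copies_set :: "nat \<Rightarrow> ('b set \<times> 'b set set) \<Rightarrow> nat set set \<Rightarrow> (nat set \<times> nat set set) set"
  where "copies_set n H C = {(f ` fst H, (\<lambda>e. f ` e) ` snd H) | f.
      inj_on f (fst H) \<and> f ` fst H \<subseteq> {..<n} \<and> (\<lambda>e. f ` e) ` snd H \<subseteq> C}"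

lemma copies_eq_card_copies_set: "copies n H C = card (copies_set n H C)"
  unfolding copies_def copies_set_def ..

lemma copies_set_subset:
  assumes "is_graph H"
  shows "copies_set n H C \<subseteq> Pow {..<n} \<times> Pow (Pow {..<n})"
proof
  fix p assume "p \<in> copies_set n H C"
  then obtain f where "p = (f ` fst H, (\<lambda>e. f ` e) ` snd H)" "f ` fst H \<subseteq> {..<n}"
    unfolding copies_set_def by blast
  with assms show "p \<in> Pow {..<n} \<times> Pow (Pow {..<n})" unfolding is_graph_def by blast
qed

lemma finite_copies_set: "is_graph H \<Longrightarrow> finite (copies_set n H C)"
  by (rule finite_subset[OF copies_set_subset]) simp_all

lemma copies_le_card_Pow:
  assumes "is_graph H"
  shows "copies n H C \<le> card (Pow {..<n} \<times> Pow (Pow {..<n}))"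
  unfolding copies_eq_card_copies_set
  by (rule card_mono[OF _ copies_set_subset[OF assms]]) simp

lemma copies_mono:
  assumes "is_graph H" "C \<subseteq> C'"
  shows "copies n H C \<le> copies n H C'"
proof -
  have "copies_set n H C \<subseteq> copies_set n H C'"
  proof
    fix p assume "p \<in> copies_set n H C"
    then obtain f where "p = (f ` fst H, (\<lambda>e. f ` e) ` snd H)" "inj_on f (fst H)"
      "f ` fst H \<subseteq> {..<n}" "(\<lambda>e. f ` e) ` snd H \<subseteq> C"
      unfolding copies_set_def by blast
    with assms(2) show "p \<in> copies_set n H C'"
      unfolding copies_set_def by blast
  qed
  then show ?thesis
    unfolding copies_eq_card_copies_set by (rule card_mono[OF finite_copies_set[OF assms(1)]])
qed

lemma ensures_le_card_Pow:
  assumes "is_graph H"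
  shows "ensures n H F k C B t \<Longrightarrow> k \<le> card (Pow {..<n} \<times> Pow (Pow {..<n}))"
proof (induction rule: ensures.induct)
  case (stop C B t)
  then show ?case using copies_le_card_Pow[OF assms, of n C] by linarith
next
  case (bmove C B)
  then obtain e where "e \<in> Kn_edges n - C - B" by (auto simp: legal_def)
  then show ?case using bmove.IH by blast
qed

lemma le_g_if_ensures:
  assumes "is_graph H" "ensures n H F k {} {} True"
  shows "k \<le> g n H F"
  unfolding g_def
proof (rule Greatest_le_nat[where b = "card (Pow {..<n} \<times> Pow (Pow {..<n}))"])
  show "ensures n H F k {} {} True" by (rule assms(2))
  show "\<And>y. ensures n H F y {} {} True \<Longrightarrow> y \<le> card (Pow {..<n} \<times> Pow (Pow {..<n}))"
    by (rule ensures_le_card_Pow[OF assms(1)])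
qed

lemma ensures_if_le_copies:
  assumes H: "is_graph H" and k: "k \<le> copies n H C"
  shows "ensures n H F k C B t"
proof -
  have "ensures n H F k C B True \<and> ensures n H F k C B False"
    using k
  proof (induction "card (Kn_edges n - C - B)" arbitrary: C B rule: less_induct)
    case less
    show ?case
    proof (cases "\<exists>e. legal n F C B e")
      case False
      with less.prems show ?thesis by (blast intro: stop)
    next
      case True
      then obtain e where e: "legal n F C B e" ..
      then have "e \<in> Kn_edges n - C - B" by (simp add: legal_def)
      then have "card (Kn_edges n - insert e C - B) < card (Kn_edges n - C - B)"
        by (intro psubset_card_mono) (auto simp: finite_Kn_edges)
      moreover have "k \<le> copies n H (insert e C)"
        using less.prems copies_mono[OF H subset_insertI] by (rule le_trans)
      ultimately have "ensures n H F k (insert e C) B False"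
        using less.hyps by blast
      then have constructor: "ensures n H F k C B True"
        by (rule cmove[OF e])
      have "ensures n H F k C (insert b B) True" if "b \<in> Kn_edges n - C - B" for b
      proof -
        have "card (Kn_edges n - C - insert b B) < card (Kn_edges n - C - B)"
          using that by (intro psubset_card_mono) (auto simp: finite_Kn_edges)
        then show ?thesis using less.hyps less.prems by blast
      qed
      with True have "ensures n H F k C B False" by (intro bmove) auto
      with constructor show ?thesis ..
    qed
  qed
  then show ?thesis by (cases t) simp_all
qed

lemma ensures_cmove_bmove:
  assumes "legal n F C B e" "legal n F (insert e C) B e'"
    and "\<And>b. b \<in> Kn_edges n - insert e C - B \<Longrightarrow> ensures n H F k (insert e C) (insert b B) True"
  shows "ensures n H F k C B True"
proof (rule cmove[OF assms(1)])
  show "ensures n H F k (insert e C) B False"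
    by (rule bmove) (use assms(2,3) in blast)+
qed

definition triangles :: "nat \<Rightarrow> nat set set \<Rightarrow> nat set set" where
  "triangles n C = {{a, b, c} | a b c. a < n \<and> b < n \<and> c < n \<and> a \<noteq> b \<and> b \<noteq> c \<and> a \<noteq> c
      \<and> {a, b} \<in> C \<and> {b, c} \<in> C \<and> {a, c} \<in> C}"

lemma triangleI:
  "\<lbrakk>a < n; b < n; c < n; a \<noteq> b; b \<noteq> c; a \<noteq> c; {a, b} \<in> C; {b, c} \<in> C; {a, c} \<in> C\<rbrakk>
    \<Longrightarrow> {a, b, c} \<in> triangles n C"
  unfolding triangles_def by blast

lemma triangles_mono: "C \<subseteq> C' \<Longrightarrow> triangles n C \<subseteq> triangles n C'"
  unfolding triangles_def by blast

lemma triangles_subset_copies_set: "triangles n C \<subseteq> fst ` copies_set n K3 C"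
proof
  fix T assume "T \<in> triangles n C"
  then obtain a b c where T: "T = {a, b, c}" and abc: "a < n" "b < n" "c < n" "a \<noteq> b" "b \<noteq> c"
    "a \<noteq> c" "{a, b} \<in> C" "{b, c} \<in> C" "{a, c} \<in> C"
    unfolding triangles_def by blast
  define f where "f i = (if i = 0 then a else if i = 1 then b else c)" for i :: nat
  have f: "f 0 = a" "f (Suc 0) = b" "f 2 = c" by (simp_all add: f_def)
  have inj: "inj_on f (fst K3)" and vertices: "f ` fst K3 = T"
    and edges: "(\<lambda>e. f ` e) ` snd K3 = {{a, b}, {b, c}, {a, c}}"
    using abc by (simp_all add: K3_def f T)
  have "(f ` fst K3, (\<lambda>e. f ` e) ` snd K3) \<in> copies_set n K3 C"
    unfolding copies_set_def
    by (rule CollectI, rule exI[of _ f]) (use inj abc in \<open>simp add: vertices edges T\<close>)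
  then show "T \<in> fst ` copies_set n K3 C" using vertices by (metis fst_conv image_eqI)
qed

lemma finite_triangles: "finite (triangles n C)"
  using finite_surj[OF finite_copies_set[OF is_graph_K3] triangles_subset_copies_set] .

lemma card_triangles_le_copies: "card (triangles n C) \<le> copies n K3 C"
proof -
  have "card (triangles n C) \<le> card (fst ` copies_set n K3 C)"
    by (rule card_mono[OF _ triangles_subset_copies_set]) (simp add: finite_copies_set[OF is_graph_K3])
  also have "\<dots> \<le> copies n K3 C"
    unfolding copies_eq_card_copies_set by (rule card_image_le[OF finite_copies_set[OF is_graph_K3]])
  finally show ?thesis .
qed

section \<open>Degrees\<close>

definition deg :: "nat set set \<Rightarrow> nat \<Rightarrow> nat" where
  "deg C y = card {e \<in> C. y \<in> e}"

lemma deg_insert: "finite C \<Longrightarrow> deg (insert e C) y = deg C y + (if y \<in> e \<and> e \<notin> C then 1 else 0)"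
proof -
  have "{x \<in> insert e C. y \<in> x} = (if y \<in> e then insert e {x \<in> C. y \<in> x} else {x \<in> C. y \<in> x})"
    by auto
  then show "finite C \<Longrightarrow> ?thesis" unfolding deg_def by (simp add: card_insert_if)
qed

lemma deg_insert_le: "finite C \<Longrightarrow> deg (insert e C) y \<le> deg C y + 1"
  by (simp add: deg_insert)

lemma deg_insert_notin: "t \<notin> e \<Longrightarrow> deg (insert e C) t = deg C t"
  unfolding deg_def by (rule arg_cong[where f = card]) auto

lemma deg_insert_le_3:
  assumes "finite C" "\<forall>v. deg C v \<le> 3" "deg C a \<le> 2" "deg C b \<le> 2"
  shows "\<forall>v. deg (insert {a, b} C) v \<le> 3"
  using assms by (auto simp: deg_insert)

lemma free_S4_if_deg_le_3:
  assumes "finite C" "\<forall>v. deg C v \<le> 3"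
  shows "free n S4 C"
  unfolding free_def
proof
  assume "\<exists>f. inj_on f (fst S4) \<and> f ` fst S4 \<subseteq> {..<n} \<and> (\<lambda>e. f ` e) ` snd S4 \<subseteq> C"
  then obtain f :: "nat \<Rightarrow> nat" where inj: "inj_on f {0, 1, 2, 3, 4}"
    and star: "{{f 0, f 1}, {f 0, f 2}, {f 0, f 3}, {f 0, f 4}} \<subseteq> C"
    by (auto simp: S4_def)
  have "4 = card {{f 0, f 1}, {f 0, f 2}, {f 0, f 3}, {f 0, f 4}}"
    using inj by (simp add: doubleton_eq_iff inj_on_def)
  also have "\<dots> \<le> deg C (f 0)"
    unfolding deg_def by (rule card_mono) (use assms(1) star in auto)
  finally have "4 \<le> deg C (f 0)" .
  with assms(2)[rule_format, of "f 0"] show False by linarith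
qed

lemma legal_S4_doubleton:
  assumes "finite C" "a \<noteq> b" "a < n" "b < n" "{a, b} \<notin> C" "{a, b} \<notin> B"
    and "\<forall>v. deg (insert {a, b} C) v \<le> 3"
  shows "legal n S4 C B {a, b}"
proof -
  have "finite (insert {a, b} C)" using assms(1) by simp
  then have "free n S4 (insert {a, b} C)" using assms(7) by (rule free_S4_if_deg_le_3)
  with assms show ?thesis by (simp add: legal_def doubleton_in_Kn_edges_iff)
qed

definition isolated :: "nat \<Rightarrow> nat set set \<Rightarrow> nat set" where
  "isolated n C = {v. v < n \<and> (\<forall>e\<in>C. v \<notin> e)}"

lemma finite_isolated: "finite (isolated n C)"
  unfolding isolated_def by simp

lemma isolated_less: "y \<in> isolated n C \<Longrightarrow> y < n"
  unfolding isolated_def by simp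

lemma deg_isolated: "y \<in> isolated n C \<Longrightarrow> deg C y = 0"
  unfolding isolated_def deg_def by (auto simp: card_eq_0_iff)

lemma doubleton_notin_if_isolated: "a \<in> isolated n C \<or> b \<in> isolated n C \<Longrightarrow> {a, b} \<notin> C"
  unfolding isolated_def by blast

lemma isolated_insert: "isolated n (insert e C) = isolated n C - e"
  unfolding isolated_def by auto

lemma card_triangles_less:
  assumes "C \<subseteq> C'" "u \<in> isolated n C" "T \<in> triangles n C'" "u \<in> T"
  shows "card (triangles n C) < card (triangles n C')"
proof (rule psubset_card_mono[OF finite_triangles])
  have "T \<notin> triangles n C" using assms(2,4) unfolding isolated_def triangles_def by blast
  then show "triangles n C \<subset> triangles n C'" using triangles_mono[OF assms(1)] assms(3) by blast
qed

definition neighbours :: "nat set set \<Rightarrow> nat \<Rightarrow> nat set" where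
  "neighbours B x = {y. {x, y} \<in> B}"

lemma finite_neighbours: "B \<subseteq> Kn_edges n \<Longrightarrow> finite (neighbours B x)"
  by (rule finite_subset[of _ "{..<n}"]) (auto simp: neighbours_def doubleton_in_Kn_edges_iff)

lemma card_neighbours_le_deg:
  assumes "finite B"
  shows "card (neighbours B x) \<le> deg B x"
proof -
  have "card (neighbours B x) = card ((\<lambda>y. {x, y}) ` neighbours B x)"
    by (rule card_image[symmetric]) (auto simp: inj_on_def doubleton_eq_iff)
  also have "\<dots> \<le> deg B x"
    unfolding deg_def by (rule card_mono) (use assms in \<open>auto simp: neighbours_def\<close>)
  finally show ?thesis .
qed

lemma sum_deg_eq_twice_card:
  assumes "B \<subseteq> Kn_edges n"
  shows "(\<Sum>y<n. deg B y) = 2 * card B"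
proof -
  have finB: "finite B" using finite_subset[OF assms finite_Kn_edges] .
  have "(\<Sum>y<n. deg B y) = (\<Sum>y<n. \<Sum>e\<in>{e. e \<in> B \<and> y \<in> e}. 1)"
    unfolding deg_def by simp
  also have "\<dots> = (\<Sum>e\<in>B. \<Sum>y\<in>{y. y \<in> {..<n} \<and> y \<in> e}. 1)"
    by (rule sum.swap_restrict) (simp_all add: finB)
  also have "\<dots> = (\<Sum>e\<in>B. 2)"
  proof (rule sum.cong)
    fix e assume "e \<in> B"
    then obtain a b where "e = {a, b}" "a \<noteq> b" "a < n" "b < n"
      using assms by (auto simp: Kn_edges_def)
    then have "{y. y \<in> {..<n} \<and> y \<in> e} = {a, b}" by auto
    then show "(\<Sum>y\<in>{y. y \<in> {..<n} \<and> y \<in> e}. 1) = (2::nat)" using \<open>a \<noteq> b\<close> by simp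
  qed simp
  finally show ?thesis by simp
qed

definition high_degree :: "nat \<Rightarrow> nat \<Rightarrow> nat set set \<Rightarrow> nat set" where
  "high_degree n d B = {y. y < n \<and> d < deg B y}"

lemma card_high_degree_le:
  assumes "B \<subseteq> Kn_edges n"
  shows "(d + 1) * card (high_degree n d B) \<le> 2 * card B"
proof -
  have "(d + 1) * card (high_degree n d B) = (\<Sum>y\<in>high_degree n d B. d + 1)"
    by simp
  also have "\<dots> \<le> (\<Sum>y\<in>high_degree n d B. deg B y)"
    by (rule sum_mono) (simp add: high_degree_def)
  also have "\<dots> \<le> (\<Sum>y<n. deg B y)"
    by (rule sum_mono2) (auto simp: high_degree_def)
  finally show ?thesis using sum_deg_eq_twice_card[OF assms] by simp
qed

lemma obtain_isolated_low_degree: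
  assumes "finite T" "card T + card (high_degree n d B) < card (isolated n C)"
  obtains y where "y \<in> isolated n C" "y \<notin> T" "deg B y \<le> d"
proof -
  have "finite (T \<union> high_degree n d B)" using assms(1) by (simp add: high_degree_def)
  moreover have "card (T \<union> high_degree n d B) < card (isolated n C)"
    using card_Un_le[of T "high_degree n d B"] assms(2) by linarith
  ultimately obtain y where "y \<in> isolated n C" "y \<notin> T \<union> high_degree n d B"
    by (rule obtain_in_diff_if_card_less)
  then show ?thesis using that by (auto simp: isolated_def high_degree_def)
qed

section \<open>Constructor's strategy\<close>

locale triangle_strategy =
  fixes n d h M k :: nat
  assumes card_high_degree: "\<And>B. B \<subseteq> Kn_edges n \<Longrightarrow> card B \<le> 2 * n \<Longrightarrow> card (high_degree n d B) \<le> h"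
    and threshold: "h + 3 * d + 10 \<le> M"
    and target: "3 * k \<le> n - (M + h + 1)"
begin

definition invariant :: "nat set set \<Rightarrow> nat set set \<Rightarrow> nat set \<Rightarrow> bool" where
  "invariant C B P \<longleftrightarrow> C \<subseteq> Kn_edges n \<and> B \<subseteq> Kn_edges n \<and> (\<forall>v. deg C v \<le> 3) \<and>
     P \<subseteq> {..<n} \<and> P \<inter> isolated n C = {} \<and> (\<forall>x\<in>P. deg C x \<le> 1) \<and>
     n \<le> 3 * card (triangles n C) + card P + card (isolated n C) \<and>
     card B + 2 * card (isolated n C) \<le> 2 * n \<and> card P \<le> h + 2"

definition reserve :: "nat set set \<Rightarrow> nat set \<Rightarrow> nat \<Rightarrow> bool" where
  "reserve C P x \<longleftrightarrow> x \<in> P \<or> x \<in> isolated n C \<and> card P \<le> h + 1"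

lemma le_copies_if_few_isolated:
  assumes "invariant C B P" "card (isolated n C) < M"
  shows "k \<le> copies n K3 C"
proof -
  have "3 * k \<le> 3 * card (triangles n C)"
    using assms target threshold unfolding invariant_def by linarith
  then show ?thesis using card_triangles_le_copies[of n C] by linarith
qed

lemma ex_legal_if_many_isolated:
  assumes inv: "invariant C B P" and many: "M \<le> card (isolated n C)"
  shows "\<exists>e. legal n S4 C B e"
proof -
  have C: "C \<subseteq> Kn_edges n" "finite C" "\<forall>v. deg C v \<le> 3"
    and B: "B \<subseteq> Kn_edges n" "finite B" "card (high_degree n d B) \<le> h"
    using inv card_high_degree finite_subset[OF _ finite_Kn_edges] unfolding invariant_def by auto
  obtain a where a: "a \<in> isolated n C" "deg B a \<le> d"
    by (rule obtain_isolated_low_degree[of "{}"]) (use B(3) threshold many in auto)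
  have "card (insert a (neighbours B a)) \<le> d + 1"
    using card_neighbours_le_deg[OF B(2), of a] a(2)
    by (simp add: card_insert_if finite_neighbours[OF B(1)])
  then have "card (insert a (neighbours B a)) < card (isolated n C)"
    using threshold many by linarith
  then obtain b where b: "b \<in> isolated n C" "b \<notin> insert a (neighbours B a)"
    using obtain_in_diff_if_card_less finite_neighbours[OF B(1)] by blast
  have "\<forall>v. deg (insert {a, b} C) v \<le> 3"
    using C deg_isolated[OF a(1)] deg_isolated[OF b(1)] by (intro deg_insert_le_3) simp_all
  then have "legal n S4 C B {a, b}"
    by (rule legal_S4_doubleton[rotated -1]) (use a b C in \<open>auto simp: isolated_def neighbours_def\<close>)
  then show ?thesis ..
qed

lemma ensures_after_blocker_move:
  assumes inv: "invariant C B P" and room: "card B + 1 + 2 * card (isolated n C) \<le> 2 * n"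
    and next_round: "\<And>B'. invariant C B' P \<Longrightarrow> ensures n K3 S4 k C B' True"
  shows "ensures n K3 S4 k C B False"
proof (cases "\<exists>e. legal n S4 C B e")
  case True
  have "invariant C (insert b B) P" if "b \<in> Kn_edges n - C - B" for b
  proof -
    have "finite B" using inv finite_subset[OF _ finite_Kn_edges] unfolding invariant_def by blast
    with that have "card (insert b B) = card B + 1" by simp
    with inv room that show ?thesis unfolding invariant_def by auto
  qed
  with True next_round show ?thesis by (blast intro: bmove)
next
  case False
  with inv have "k \<le> copies n K3 C"
    using ex_legal_if_many_isolated le_copies_if_few_isolated not_le by blast
  with False show ?thesis by (rule stop)
qed


context
  fixes C B P
  assumes inv: "invariant C B P"
    and IH: "\<And>C' B' P'. invariant C' B' P' \<Longrightarrow> card (isolated n C') < card (isolated n C) \<Longrightarrow>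
      ensures n K3 S4 k C' B' True"
begin

lemma finite_position: "finite C" "finite B" "finite P"
proof -
  have "C \<subseteq> Kn_edges n" "B \<subseteq> Kn_edges n" "P \<subseteq> {..<n}"
    using inv unfolding invariant_def by simp_all
  then show "finite C" "finite B" "finite P"
    by (simp_all add: finite_subset[OF _ finite_Kn_edges] finite_subset[OF _ finite_lessThan])
qed

lemma reserve_vertex:
  assumes "reserve C P x"
  shows "x < n" "deg C x \<le> 1" "x \<notin> isolated n C \<Longrightarrow> x \<in> P"
  using assms inv isolated_less deg_isolated[of x n C] unfolding invariant_def reserve_def by auto

lemma ensures_after_round_end:
  assumes "invariant C' B' P'" "card B' + 1 + 2 * card (isolated n C') \<le> 2 * n"
    and "card (isolated n C') < card (isolated n C)"
  shows "ensures n K3 S4 k C' B' False"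
  by (rule ensures_after_blocker_move[OF assms(1,2) IH[OF _ assms(3)]])

context
  fixes u v w
  assumes uvw: "u \<in> isolated n C" "v \<in> isolated n C" "w \<in> isolated n C"
    and distinct_uvw: "u \<noteq> v" "u \<noteq> w" "v \<noteq> w"
begin

lemma deg_after_uv_uw:
  shows "\<forall>t. deg (insert {u, w} (insert {u, v} C)) t \<le> 3"
    and "deg (insert {u, w} (insert {u, v} C)) u = 2"
    and "deg (insert {u, w} (insert {u, v} C)) v = 1"
    and "deg (insert {u, w} (insert {u, v} C)) w = 1"
proof -
  have deg_C: "\<forall>t. deg C t \<le> 3" using inv unfolding invariant_def by simp
  have deg_0: "deg C u = 0" "deg C v = 0" "deg C w = 0"
    using uvw by (simp_all add: deg_isolated)
  have new: "{u, v} \<notin> C" "{u, w} \<notin> insert {u, v} C"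
    using uvw distinct_uvw by (auto simp: isolated_def doubleton_eq_iff)
  have "\<forall>t. deg (insert {u, v} C) t \<le> 3"
    by (rule deg_insert_le_3) (simp_all add: finite_position(1) deg_C deg_0)
  then show "\<forall>t. deg (insert {u, w} (insert {u, v} C)) t \<le> 3"
    by (rule deg_insert_le_3[rotated])
      (use finite_position(1) new deg_0 distinct_uvw in \<open>simp_all add: deg_insert\<close>)
  show "deg (insert {u, w} (insert {u, v} C)) u = 2"
    and "deg (insert {u, w} (insert {u, v} C)) v = 1"
    and "deg (insert {u, w} (insert {u, v} C)) w = 1"
    using finite_position(1) new deg_0 distinct_uvw by (simp_all add: deg_insert)
qed

lemma deg_triangle_uvw: "\<forall>t. deg (insert {v, w} (insert {u, w} (insert {u, v} C))) t \<le> 3"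
  by (rule deg_insert_le_3) (simp_all add: deg_after_uv_uw finite_position(1))

lemma ensures_after_triangle_uvw:
  assumes B': "B \<subseteq> B'" "B' \<subseteq> Kn_edges n" "card B' \<le> card B + 3"
  shows "ensures n K3 S4 k (insert {v, w} (insert {u, w} (insert {u, v} C))) B' False"
proof -
  define C' where "C' = insert {v, w} (insert {u, w} (insert {u, v} C))"
  have C: "C \<subseteq> Kn_edges n" "P \<inter> isolated n C = {}" "\<forall>y\<in>P. deg C y \<le> 1"
    using inv unfolding invariant_def by simp_all
  have isolated_C': "isolated n C' = isolated n C - {u, v, w}"
    by (auto simp: C'_def isolated_insert)
  have card_isolated: "card (isolated n C') + 3 = card (isolated n C)"
    using uvw distinct_uvw card_mono[OF finite_isolated, of "{u, v, w}" n C]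
    by (simp add: isolated_C' card_Diff_subset)
  have "card (triangles n C) < card (triangles n C')"
    by (rule card_triangles_less[OF _ uvw(1) triangleI[where a = u and b = v and c = w]])
      (use uvw distinct_uvw isolated_less in \<open>auto simp: C'_def\<close>)
  moreover have "C' \<subseteq> Kn_edges n"
    using C(1) uvw distinct_uvw by (simp add: C'_def doubleton_in_Kn_edges_iff isolated_less)
  moreover have "\<forall>y. deg C' y \<le> 3"
    unfolding C'_def by (rule deg_triangle_uvw)
  moreover have "\<forall>y\<in>P. deg C' y \<le> 1"
  proof
    fix y assume "y \<in> P"
    moreover from this have "y \<noteq> u" "y \<noteq> v" "y \<noteq> w" using C(2) uvw by blast+
    ultimately show "deg C' y \<le> 1" using C(3) by (simp add: C'_def deg_insert_notin)
  qed
  ultimately have "invariant C' B' P" "card B' + 1 + 2 * card (isolated n C') \<le> 2 * n"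
    using inv B' card_isolated unfolding invariant_def isolated_C' by auto
  then show ?thesis
    unfolding C'_def[symmetric] by (rule ensures_after_round_end) (use card_isolated in simp)
qed

context
  fixes x
  assumes reserve_x: "reserve C P x"
    and distinct_x: "x \<noteq> u" "x \<noteq> v" "x \<noteq> w"
begin

lemma deg_after_uv_uw_ux:
  shows "\<forall>t. deg (insert {u, x} (insert {u, w} (insert {u, v} C))) t \<le> 3"
    and "deg (insert {u, x} (insert {u, w} (insert {u, v} C))) v = 1"
    and "deg (insert {u, x} (insert {u, w} (insert {u, v} C))) w = 1"
    and "deg (insert {u, x} (insert {u, w} (insert {u, v} C))) x \<le> 2"
proof -
  have deg_x: "deg (insert {u, w} (insert {u, v} C)) x \<le> 1"
    using reserve_vertex(2)[OF reserve_x] distinct_x by (simp add: deg_insert_notin)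
  show "\<forall>t. deg (insert {u, x} (insert {u, w} (insert {u, v} C))) t \<le> 3"
    by (rule deg_insert_le_3) (use deg_after_uv_uw deg_x finite_position(1) in simp_all)
  show "deg (insert {u, x} (insert {u, w} (insert {u, v} C))) v = 1"
    and "deg (insert {u, x} (insert {u, w} (insert {u, v} C))) w = 1"
    using deg_after_uv_uw(3,4) distinct_uvw distinct_x by (simp_all add: deg_insert_notin)
  show "deg (insert {u, x} (insert {u, w} (insert {u, v} C))) x \<le> 2"
    using deg_x finite_position(1) deg_insert[of "insert {u, w} (insert {u, v} C)" "{u, x}" x] by simp
qed

lemma deg_triangle_with_reserve:
  assumes "{y, z} = {v, w}"
  shows "\<forall>t. deg (insert {y, x} (insert {u, x} (insert {u, w} (insert {u, v} C)))) t \<le> 3"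
proof -
  have "y = v \<or> y = w" using assms by (auto simp: doubleton_eq_iff)
  then have "deg (insert {u, x} (insert {u, w} (insert {u, v} C))) y \<le> 2"
    using deg_after_uv_uw_ux(2,3) by auto
  then show ?thesis
    by (rule deg_insert_le_3[rotated 2]) (simp_all add: deg_after_uv_uw_ux(1,4) finite_position(1))
qed

lemma ensures_after_triangle_with_reserve:
  assumes yz: "{y, z} = {v, w}"
    and B': "B \<subseteq> B'" "B' \<subseteq> Kn_edges n" "card B' \<le> card B + 3"
  shows "ensures n K3 S4 k (insert {y, x} (insert {u, x} (insert {u, w} (insert {u, v} C)))) B' False"
proof -
  define C' where "C' = insert {y, x} (insert {u, x} (insert {u, w} (insert {u, v} C)))"
  define P' where "P' = insert z (P - {x})"
  have C: "C \<subseteq> Kn_edges n" "P \<subseteq> {..<n}" "P \<inter> isolated n C = {}" "\<forall>t\<in>P. deg C t \<le> 1"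
    "card P \<le> h + 2"
    using inv unfolding invariant_def by simp_all
  have yz_cases: "y = v \<and> z = w \<or> y = w \<and> z = v"
    using yz distinct_uvw by (auto simp: doubleton_eq_iff)
  then have yz_facts: "y \<in> isolated n C" "z \<in> isolated n C" "y \<noteq> z" "u \<noteq> y" "u \<noteq> z" "x \<noteq> y" "x \<noteq> z"
    using uvw distinct_uvw distinct_x by auto
  have isolated_C': "isolated n C' = isolated n C - {u, y, z} - {x}"
    using yz_cases by (auto simp: C'_def isolated_insert)
  have "card (isolated n C - {u, y, z}) + 3 = card (isolated n C)"
    using uvw yz_facts card_mono[OF finite_isolated, of "{u, y, z}" n C]
    by (simp add: card_Diff_subset)
  moreover have "card (isolated n C') + (if x \<in> isolated n C then 1 else 0)
      = card (isolated n C - {u, y, z})"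
  proof (cases "x \<in> isolated n C")
    case True
    then show ?thesis
      using card.remove[of "isolated n C - {u, y, z}" x] yz_facts distinct_x
      by (simp add: isolated_C' finite_isolated)
  qed (simp add: isolated_C')
  ultimately have card_isolated:
    "card (isolated n C') + 3 + (if x \<in> isolated n C then 1 else 0) = card (isolated n C)"
    by linarith
  have "z \<notin> P - {x}" using yz_facts(2) C(3) by blast
  then have "card P' = card (P - {x}) + 1"
    using finite_position(3) by (simp add: P'_def)
  moreover have "card (P - {x}) + (if x \<in> isolated n C then 0 else 1) = card P"
  proof (cases "x \<in> isolated n C")
    case True
    with C(3) have "P - {x} = P" by blast
    with True show ?thesis by simp
  next
    case False
    then show ?thesis using card.remove[OF finite_position(3) reserve_vertex(3)[OF reserve_x]] by simp
  qed
  ultimately have card_P': "card P' + (if x \<in> isolated n C then 0 else 1) = card P + 1"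
    by linarith
  have "{u, y} \<in> C'" using yz_cases by (auto simp: C'_def)
  then have "card (triangles n C) < card (triangles n C')"
    by (intro card_triangles_less[OF _ uvw(1) triangleI[where a = u and b = y and c = x]])
      (use yz_facts reserve_vertex[OF reserve_x] uvw distinct_x isolated_less in \<open>auto simp: C'_def\<close>)
  moreover have "C' \<subseteq> Kn_edges n"
    using C(1) uvw yz_facts reserve_vertex[OF reserve_x] distinct_uvw distinct_x
    by (simp add: C'_def doubleton_in_Kn_edges_iff isolated_less)
  moreover have "\<forall>t. deg C' t \<le> 3"
    unfolding C'_def by (rule deg_triangle_with_reserve[OF yz])
  moreover have "\<forall>t\<in>P'. deg C' t \<le> 1"
  proof
    fix t assume "t \<in> P'"
    then consider "t = z" | "t \<in> P" "t \<notin> {u, v, w, x}"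
      using uvw yz_facts C(3) unfolding P'_def by blast
    then show "deg C' t \<le> 1"
    proof cases
      case 1
      then show ?thesis
        using yz_cases yz_facts deg_after_uv_uw_ux(2,3) by (auto simp: C'_def deg_insert_notin)
    next
      case 2
      then show ?thesis
        using C(4) yz_cases by (auto simp: C'_def deg_insert_notin)
    qed
  qed
  moreover have "P' \<subseteq> {..<n}" "P' \<inter> isolated n C' = {}" "card P' \<le> h + 2"
    using C(2,3,5) yz_facts(2) isolated_less card_P' reserve_x
    by (auto simp: P'_def isolated_C' reserve_def split: if_splits)
  ultimately have "invariant C' B' P'" "card B' + 1 + 2 * card (isolated n C') \<le> 2 * n"
    using inv B' card_isolated card_P' unfolding invariant_def by (auto split: if_splits)
  then show ?thesis
    unfolding C'_def[symmetric] by (rule ensures_after_round_end) (use card_isolated in simp)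
qed

lemma ensures_closing_triangle_with_reserve:
  assumes B': "B \<subseteq> B'" "B' \<subseteq> Kn_edges n" "card B' \<le> card B + 3"
    and free: "{v, x} \<notin> B' \<or> {w, x} \<notin> B'"
  shows "ensures n K3 S4 k (insert {u, x} (insert {u, w} (insert {u, v} C))) B' True"
proof -
  obtain y z where yz: "{y, z} = {v, w}" and free_yx: "{y, x} \<notin> B'"
    using free by (metis insert_commute)
  have y: "y \<in> isolated n C" "y \<noteq> u" "y \<noteq> x"
    using yz uvw distinct_uvw distinct_x by (auto simp: doubleton_eq_iff)
  have "{y, x} \<notin> insert {u, x} (insert {u, w} (insert {u, v} C))"
    using y distinct_x unfolding isolated_def by (auto simp: doubleton_eq_iff)
  then have "legal n S4 (insert {u, x} (insert {u, w} (insert {u, v} C))) B' {y, x}"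
    using finite_position(1) y(1,3) reserve_vertex(1)[OF reserve_x] free_yx deg_triangle_with_reserve[OF yz]
    by (intro legal_S4_doubleton) (simp_all add: isolated_less)
  moreover have "ensures n K3 S4 k (insert {y, x} (insert {u, x} (insert {u, w} (insert {u, v} C)))) B' False"
    by (rule ensures_after_triangle_with_reserve[OF yz B'])
  ultimately show ?thesis by (rule cmove)
qed

lemma ensures_after_two_moves:
  assumes B': "B \<subseteq> B'" "B' \<subseteq> Kn_edges n" "card B' \<le> card B + 1"
    and free: "{v, w} \<notin> B'" "{u, x} \<notin> B'" "{v, x} \<notin> B'" "{w, x} \<notin> B'"
    and b: "b \<in> Kn_edges n" "b \<notin> B'"
  shows "ensures n K3 S4 k (insert {u, w} (insert {u, v} C)) (insert b B') True"
proof -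
  define C2 where "C2 = insert {u, w} (insert {u, v} C)"
  have B2: "B \<subseteq> insert b B'" "insert b B' \<subseteq> Kn_edges n" "card (insert b B') \<le> card B + 2"
    using B' b finite_subset[OF B'(2) finite_Kn_edges] by auto
  have less_n: "u < n" "v < n" "w < n" "x < n"
    using isolated_less[OF uvw(1)] isolated_less[OF uvw(2)] isolated_less[OF uvw(3)] reserve_vertex(1)[OF reserve_x]
    by simp_all
  have "{v, w} \<notin> C" "{u, x} \<notin> C" "{v, x} \<notin> C"
    using uvw doubleton_notin_if_isolated by blast+
  then have new: "{v, w} \<notin> C2" "{u, x} \<notin> C2" "{v, x} \<notin> insert {u, x} C2"
    using distinct_uvw distinct_x by (simp_all add: C2_def doubleton_eq_iff)
  show ?thesis
  proof (cases "b = {v, w}")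
    case False
    then have "legal n S4 C2 (insert b B') {v, w}"
      using finite_position(1) distinct_uvw less_n new free(1) deg_triangle_uvw
      by (intro legal_S4_doubleton) (simp_all add: C2_def)
    moreover have "ensures n K3 S4 k (insert {v, w} C2) (insert b B') False"
      unfolding C2_def by (rule ensures_after_triangle_uvw) (use B2 in auto)
    ultimately show ?thesis unfolding C2_def by (rule cmove)
  next
    case True
    then have free_b: "{u, x} \<notin> insert b B'" "{v, x} \<notin> insert b B'" "{w, x} \<notin> insert b B'"
      using free distinct_x by (auto simp: doubleton_eq_iff)
    have "legal n S4 C2 (insert b B') {u, x}"
      using finite_position(1) distinct_x less_n new free_b deg_after_uv_uw_ux(1)
      by (intro legal_S4_doubleton) (simp_all add: C2_def)
    moreover have "legal n S4 (insert {u, x} C2) (insert b B') {v, x}"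
      using finite_position(1) distinct_x less_n new free_b deg_triangle_with_reserve[of v w]
      by (intro legal_S4_doubleton) (simp_all add: C2_def)
    moreover have "ensures n K3 S4 k (insert {u, x} C2) (insert b' (insert b B')) True"
      if "b' \<in> Kn_edges n - insert {u, x} C2 - insert b B'" for b'
    proof -
      have "finite (insert b B')" using finite_subset[OF B2(2) finite_Kn_edges] .
      then have "card (insert b' (insert b B')) \<le> card B + 3"
        using B2(3) by (simp add: card_insert_if)
      moreover have "insert b' (insert b B') \<subseteq> Kn_edges n" using B2(2) that by blast
      moreover have "{v, x} \<notin> insert b' (insert b B') \<or> {w, x} \<notin> insert b' (insert b B')"
      proof -
        have "{v, x} \<noteq> {w, x}" using distinct_uvw distinct_x by (simp add: doubleton_eq_iff)
        then show ?thesis using free_b(2,3) by blast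
      qed
      ultimately show ?thesis
        unfolding C2_def by (intro ensures_closing_triangle_with_reserve) (use B2(1) in auto)
    qed
    ultimately show ?thesis unfolding C2_def by (rule ensures_cmove_bmove)
  qed
qed

end

end

lemma ensures_after_first_move:
  assumes uv: "u \<in> isolated n C" "v \<in> isolated n C" "u \<noteq> v"
    and reserves: "reserve C P x1" "reserve C P x2" "x1 \<noteq> x2" "x1 \<notin> {u, v}" "x2 \<notin> {u, v}"
    and low: "deg B u \<le> d" "deg B v \<le> d" "deg B x1 \<le> d" "deg B x2 \<le> d"
    and free: "{u, x1} \<notin> B" "{v, x1} \<notin> B" "{u, x2} \<notin> B" "{v, x2} \<notin> B"
    and many: "M \<le> card (isolated n C)"
    and b: "b \<in> Kn_edges n" "b \<notin> B"
  shows "ensures n K3 S4 k (insert {u, v} C) (insert b B) True"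
proof -
  define B1 where "B1 = insert b B"
  have B1: "B \<subseteq> B1" "B1 \<subseteq> Kn_edges n" "card B1 \<le> card B + 1" "finite B1"
    using inv b finite_position(2) unfolding invariant_def B1_def by auto
  obtain x where x: "reserve C P x" "x \<noteq> u" "x \<noteq> v" "deg B x \<le> d"
    and free_x: "{u, x} \<notin> B1" "{v, x} \<notin> B1"
  proof (cases "b = {u, x1} \<or> b = {v, x1}")
    case True
    then have "{u, x2} \<notin> B1" "{v, x2} \<notin> B1"
      using free reserves(3-5) uv(3) by (auto simp: B1_def doubleton_eq_iff)
    with that reserves low show ?thesis by blast
  next
    case False
    then have "{u, x1} \<notin> B1" "{v, x1} \<notin> B1" using free by (auto simp: B1_def)
    with that reserves low show ?thesis by blast
  qed
  have card_neighbours: "card (neighbours B1 y) \<le> d + 1" if "deg B y \<le> d" for y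
    using card_neighbours_le_deg[OF B1(4), of y] deg_insert_le[OF finite_position(2), of b y] that
    unfolding B1_def by linarith
  define T where "T = {u, v, x} \<union> neighbours B1 u \<union> neighbours B1 v \<union> neighbours B1 x"
  have "finite T" using finite_neighbours[OF B1(2)] by (simp add: T_def)
  moreover have "card T < card (isolated n C)"
  proof -
    have "card T \<le> card {u, v, x} + card (neighbours B1 u) + card (neighbours B1 v)
        + card (neighbours B1 x)"
      unfolding T_def by (meson card_Un_le le_trans add_le_mono1 add_le_mono)
    also have "\<dots> \<le> 3 + (d + 1) + (d + 1) + (d + 1)"
      using card_neighbours low(1,2) x(4) by (intro add_mono) (auto simp: card_insert_if)
    finally show ?thesis using threshold many by linarith
  qed
  ultimately obtain w where w: "w \<in> isolated n C" "w \<notin> T"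
    by (rule obtain_in_diff_if_card_less)
  then have distinct_w: "u \<noteq> w" "v \<noteq> w" "x \<noteq> w"
    and free_w: "{u, w} \<notin> B1" "{v, w} \<notin> B1" "{w, x} \<notin> B1"
    by (auto simp: T_def neighbours_def insert_commute)
  note uvw = uv(1,2) w(1) uv(3) distinct_w(1,2)
  have less_n: "u < n" "v < n" "w < n" using uvw(1-3) isolated_less by blast+
  have "legal n S4 (insert {u, v} C) B1 {u, w}"
  proof (rule legal_S4_doubleton)
    show "\<forall>t. deg (insert {u, w} (insert {u, v} C)) t \<le> 3"
      by (rule deg_after_uv_uw(1)[OF uvw])
    show "{u, w} \<notin> insert {u, v} C"
      using uvw doubleton_notin_if_isolated by (auto simp: doubleton_eq_iff)
  qed (use finite_position(1) less_n distinct_w free_w in auto)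
  moreover have "legal n S4 (insert {u, w} (insert {u, v} C)) B1 {v, w}"
  proof (rule legal_S4_doubleton)
    show "\<forall>t. deg (insert {v, w} (insert {u, w} (insert {u, v} C))) t \<le> 3"
      by (rule deg_triangle_uvw[OF uvw])
    show "{v, w} \<notin> insert {u, w} (insert {u, v} C)"
      using uvw doubleton_notin_if_isolated by (auto simp: doubleton_eq_iff)
  qed (use finite_position(1) less_n distinct_w free_w in auto)
  moreover have "ensures n K3 S4 k (insert {u, w} (insert {u, v} C)) (insert b' B1) True"
    if "b' \<in> Kn_edges n - insert {u, w} (insert {u, v} C) - B1" for b'
    using that
    by (intro ensures_after_two_moves[OF uvw x(1-3) distinct_w(3) B1(1-3) free_w(2) free_x free_w(3)])
      auto
  ultimately show ?thesis unfolding B1_def by (rule ensures_cmove_bmove)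
qed

lemma obtain_reserve_pair:
  assumes many: "M \<le> card (isolated n C)"
  obtains x1 x2 where "x1 \<noteq> x2" "reserve C P x1" "reserve C P x2" "deg B x1 \<le> d" "deg B x2 \<le> d"
proof -
  define X where "X = {x \<in> P. deg B x \<le> d}"
  have high: "card (high_degree n d B) \<le> h"
    using inv card_high_degree unfolding invariant_def by auto
  show ?thesis
  proof (cases "2 \<le> card X")
    case True
    then obtain x1 x2 where "x1 \<in> X" "x2 \<in> X" "x1 \<noteq> x2"
      by (metis card_2_iff' card_le_Suc_iff numeral_2_eq_2 obtain_subset_with_card_n subset_iff)
    with that show ?thesis by (auto simp: X_def reserve_def)
  next
    case False
    have "P \<subseteq> X \<union> high_degree n d B"
      using inv unfolding invariant_def X_def high_degree_def by auto
    then have "card P \<le> card X + card (high_degree n d B)"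
      using card_mono[OF _ \<open>P \<subseteq> _\<close>] card_Un_le[of X "high_degree n d B"] finite_position(3)
      by (simp add: X_def high_degree_def)
    then have small_P: "card P \<le> h + 1" using False high by linarith
    obtain x1 where x1: "x1 \<in> isolated n C" "deg B x1 \<le> d"
      by (rule obtain_isolated_low_degree[of "{}"]) (use high threshold many in auto)
    obtain x2 where x2: "x2 \<in> isolated n C" "x2 \<noteq> x1" "deg B x2 \<le> d"
      by (rule obtain_isolated_low_degree[of "{x1}"]) (use high threshold many in auto)
    from x1 x2 small_P that show ?thesis by (auto simp: reserve_def)
  qed
qed

lemma ensures_round:
  assumes many: "M \<le> card (isolated n C)"
  shows "ensures n K3 S4 k C B True"
proof -
  have B: "B \<subseteq> Kn_edges n" "card (high_degree n d B) \<le> h"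
    using inv card_high_degree unfolding invariant_def by auto
  have card_neighbours: "card (neighbours B y) \<le> d" if "deg B y \<le> d" for y
    using card_neighbours_le_deg[OF finite_position(2), of y] that by linarith
  obtain x1 x2 where x: "x1 \<noteq> x2" "reserve C P x1" "reserve C P x2" "deg B x1 \<le> d" "deg B x2 \<le> d"
    using obtain_reserve_pair[OF many] .
  define T where "T = {x1, x2} \<union> neighbours B x1 \<union> neighbours B x2"
  have T: "finite T" "card T \<le> 2 + d + d"
  proof -
    show "finite T" using finite_neighbours[OF B(1)] by (simp add: T_def)
    have "card T \<le> card {x1, x2} + card (neighbours B x1) + card (neighbours B x2)"
      unfolding T_def by (meson card_Un_le le_trans add_le_mono1)
    also have "\<dots> \<le> 2 + d + d"
      using card_neighbours x(4,5) by (intro add_mono) (auto simp: card_insert_if)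
    finally show "card T \<le> 2 + d + d" .
  qed
  obtain u where u: "u \<in> isolated n C" "u \<notin> T" "deg B u \<le> d"
    by (rule obtain_isolated_low_degree[where n = n and d = d and B = B and C = C, OF T(1)])
      (use T(2) B(2) threshold many in auto)
  have T': "finite (insert u T \<union> neighbours B u)" "card (insert u T \<union> neighbours B u) \<le> 3 + 3 * d"
    using T u(2) card_Un_le[of "insert u T" "neighbours B u"] card_neighbours[OF u(3)]
      finite_neighbours[OF B(1)]
    by auto
  obtain v where v: "v \<in> isolated n C" "v \<notin> insert u T \<union> neighbours B u" "deg B v \<le> d"
    by (rule obtain_isolated_low_degree[where n = n and d = d and B = B and C = C, OF T'(1)])
      (use T'(2) B(2) threshold many in auto)
  have distinct: "u \<noteq> v" "x1 \<notin> {u, v}" "x2 \<notin> {u, v}"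
    and free: "{u, v} \<notin> B" "{u, x1} \<notin> B" "{v, x1} \<notin> B" "{u, x2} \<notin> B" "{v, x2} \<notin> B"
    using u(2) v(2) by (auto simp: T_def neighbours_def insert_commute)
  have less_n: "u < n" "v < n" "x1 < n" using u v reserve_vertex(1)[OF x(2)] isolated_less by blast+
  have deg_C: "\<forall>t. deg C t \<le> 3" using inv unfolding invariant_def by simp
  have deg_uv: "\<forall>t. deg (insert {u, v} C) t \<le> 3"
    by (rule deg_insert_le_3) (use finite_position(1) deg_C u(1) v(1) deg_isolated in auto)
  have "{u, v} \<notin> C" using u(1) doubleton_notin_if_isolated by blast
  then have "legal n S4 C B {u, v}"
    using finite_position(1) less_n distinct free deg_uv by (intro legal_S4_doubleton) auto
  moreover have "legal n S4 (insert {u, v} C) B {u, x1}"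
  proof (rule legal_S4_doubleton)
    have "deg (insert {u, v} C) u \<le> 2" "deg (insert {u, v} C) x1 \<le> 2"
      using deg_insert_le[OF finite_position(1), of "{u, v}" u] deg_isolated[OF u(1)]
        reserve_vertex(2)[OF x(2)] distinct(2) by (auto simp: deg_insert_notin)
    then show "\<forall>t. deg (insert {u, x1} (insert {u, v} C)) t \<le> 3"
      by (intro deg_insert_le_3[OF _ deg_uv]) (simp add: finite_position(1))
    show "{u, x1} \<notin> insert {u, v} C"
      using distinct doubleton_notin_if_isolated u(1) by (auto simp: doubleton_eq_iff)
  qed (use finite_position(1) less_n distinct free in auto)
  moreover have "ensures n K3 S4 k (insert {u, v} C) (insert b B) True"
    if "b \<in> Kn_edges n - insert {u, v} C - B" for b
    using that
    by (intro ensures_after_first_move[OF u(1) v(1) distinct(1) x(2,3,1) distinct(2,3) u(3) v(3) x(4,5)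
          free(2-5) many]) auto
  ultimately show ?thesis by (rule ensures_cmove_bmove)
qed

end


lemma ensures_if_invariant: "invariant C B P \<Longrightarrow> ensures n K3 S4 k C B True"
proof (induction "card (isolated n C)" arbitrary: C B P rule: less_induct)
  case less
  show ?case
  proof (cases "card (isolated n C) < M")
    case True
    show ?thesis
      by (rule ensures_if_le_copies[OF is_graph_K3 le_copies_if_few_isolated[OF less.prems True]])
  next
    case False
    show ?thesis
    proof (rule ensures_round[OF less.prems])
      show "ensures n K3 S4 k C' B' True"
        if "invariant C' B' P'" "card (isolated n C') < card (isolated n C)" for C' B' P'
        using less.hyps that by blast
    qed (use False in simp)
  qed
qed

lemma le_g_K3_S4: "k \<le> g n K3 S4"
proof (rule le_g_if_ensures[OF is_graph_K3 ensures_if_invariant])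
  have "isolated n {} = {..<n}" "\<And>v. deg {} v = 0"
    by (auto simp: isolated_def deg_def)
  then show "invariant {} {} {}" unfolding invariant_def by simp
qed

end

lemma n_le_3_g_K3_S4:
  assumes N: "0 < N"
  shows "n \<le> 3 * g n K3 S4 + 8 * N + 3 * (n div N) + 11"
proof -
  define d where "d = n div N"
  define h where "h = 4 * n div (d + 1)"
  define k where "k = (n - (2 * h + 3 * d + 11)) div 3"
  interpret triangle_strategy n d h "h + 3 * d + 10" k
  proof
    fix B assume "B \<subseteq> Kn_edges n" "card B \<le> 2 * n"
    then have "(d + 1) * card (high_degree n d B) \<le> 4 * n"
      using card_high_degree_le[of B n d] by linarith
    then show "card (high_degree n d B) \<le> h"
      unfolding h_def by (simp add: less_eq_div_iff_mult_less_eq mult.commute)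
  qed (simp_all add: k_def)
  have "h * (d + 1) < 4 * N * (d + 1)"
  proof -
    have "h * (d + 1) \<le> 4 * n" unfolding h_def by (rule div_times_less_eq_dividend)
    also have "4 * n < 4 * N * (d + 1)"
      using dividend_less_times_div[OF N, of n] unfolding d_def by (simp add: algebra_simps)
    finally show ?thesis .
  qed
  then have "h < 4 * N" by (rule mult_less_cancel2[THEN iffD1, THEN conjunct2])
  moreover have "n \<le> 3 * k + 2 * h + 3 * d + 13" unfolding k_def by linarith
  ultimately show ?thesis using le_g_K3_S4 unfolding d_def by linarith
qed

theorem proposition3p5:
  shows "\<forall>\<epsilon>::real>0. \<forall>\<^sub>F n in sequentially.
           real (g n K3 S4) \<ge> (1 - \<epsilon>) * (real n / 3)"
proof (intro allI impI)
  fix \<epsilon> :: real assume \<epsilon>: "\<epsilon> > 0"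
  define N :: nat where "N = nat \<lceil>6 / \<epsilon>\<rceil> + 1"
  have "6 / \<epsilon> \<le> real N"
    unfolding N_def using real_nat_ceiling_ge[of "6 / \<epsilon>"] by linarith
  then have N: "0 < N" "6 \<le> real N * \<epsilon>"
    using \<epsilon> by (auto simp: N_def pos_divide_le_eq)
  have "real (g n K3 S4) \<ge> (1 - \<epsilon>) * (real n / 3)" if n: "2 * (8 * real N + 11) \<le> \<epsilon> * real n" for n
  proof -
    have "real (n div N) \<le> real n / real N" by (rule of_nat_div_le_of_nat)
    also have "\<dots> \<le> \<epsilon> * real n / 6"
    proof -
      have "6 * real n \<le> (real N * \<epsilon>) * real n" using N(2) by (simp add: mult_right_mono)
      then show ?thesis using N(1) by (simp add: field_simps)
    qed
    finally have "real n \<le> 3 * real (g n K3 S4) + (8 * real N + 11) + \<epsilon> * real n / 2"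
      using n_le_3_g_K3_S4[OF N(1), of n] by linarith
    with n show ?thesis by (simp add: field_simps)
  qed
  moreover obtain n0 :: nat where "2 * (8 * real N + 11) / \<epsilon> \<le> n0"
    using real_arch_simple by blast
  then have "2 * (8 * real N + 11) \<le> \<epsilon> * real n" if "n0 \<le> n" for n
    using \<epsilon> that by (simp add: field_simps) (meson mult_left_mono of_nat_le_iff order.trans less_imp_le)
  ultimately show "\<forall>\<^sub>F n in sequentially. real (g n K3 S4) \<ge> (1 - \<epsilon>) * (real n / 3)"
    unfolding eventually_sequentially by blast
qed

end
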